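(* Let $G$ be a graph on $n$ nodes with $m$ edges. Then $\sum_{i=1}^k\lambda_i(G)\le m+\binom{k+1}{2}$ holds for every $k\in\{1,\dots,n\}$ if and only if $G$ is spectrally threshold dominated.
   Context: All graphs are finite and simple. For a graph $G$ on $n$ nodes, the Laplacian eigenvalues (eigenvalues of $L(G)=D(G)-A(G)$) are $\lambda_1(G)\ge\dots\ge\lambda_n(G)=0$. A threshold graph is a graph obtainable from the empty graph by repeatedly adding a new node that is either isolated or adjacent to all previously added nodes. A graph $G$ on $n$ nodes with $m$ edges is spectrally threshold dominated if for each $k\in\{1,\dots,n\}$ there is a threshold graph $T_k$ on $n$ nodes with $m$ edges satisfying $\sum_{i=1}^k\lambda_i(T_k)\ge\sum_{i=1}^k\lambda_i(G)$. *)

theory Defs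
  imports "Jordan_Normal_Form.Char_Poly"
begin

definition is_graph :: "nat \<Rightarrow> (nat \<Rightarrow> nat \<Rightarrow> bool) \<Rightarrow> bool" where
  "is_graph n A \<longleftrightarrow> (\<forall>i j. A i j \<longrightarrow> i < n \<and> j < n \<and> i \<noteq> j \<and> A j i)"

definition num_edges :: "nat \<Rightarrow> (nat \<Rightarrow> nat \<Rightarrow> bool) \<Rightarrow> nat" where
  "num_edges n A = card {(i, j). i < j \<and> j < n \<and> A i j}"

definition degree :: "nat \<Rightarrow> (nat \<Rightarrow> nat \<Rightarrow> bool) \<Rightarrow> nat \<Rightarrow> nat" where
  "degree n A i = card {j. j < n \<and> A i j}"

definition laplacian :: "nat \<Rightarrow> (nat \<Rightarrow> nat \<Rightarrow> bool) \<Rightarrow> real mat" where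
  "laplacian n A = mat n n (\<lambda>(i, j). (if i = j then real (degree n A i) else 0)
                                     - (if A i j then 1 else 0))"

definition lap_eigs :: "nat \<Rightarrow> (nat \<Rightarrow> nat \<Rightarrow> bool) \<Rightarrow> real list" where
  "lap_eigs n A = (THE xs. length xs = n \<and> sorted_wrt (\<ge>) xs \<and>
       char_poly (laplacian n A) = (\<Prod>x\<leftarrow>xs. [:- x, 1:]))"

definition lap_sum :: "nat \<Rightarrow> (nat \<Rightarrow> nat \<Rightarrow> bool) \<Rightarrow> nat \<Rightarrow> real" where
  "lap_sum n A k = (\<Sum>i<k. lap_eigs n A ! i)"

text \<open>Threshold graph on {0..<n}: the nodes are added in some order vs!0, vs!1, ...;
  node vs!j is added either isolated (bs!j false) or adjacent to all previously
  added nodes (bs!j true).\<close>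
definition is_threshold :: "nat \<Rightarrow> (nat \<Rightarrow> nat \<Rightarrow> bool) \<Rightarrow> bool" where
  "is_threshold n T \<longleftrightarrow> is_graph n T \<and>
     (\<exists>vs bs. distinct vs \<and> set vs = {0..<n} \<and> length bs = n \<and>
        (\<forall>i<n. \<forall>j<n. T (vs ! i) (vs ! j) \<longleftrightarrow>
             (i < j \<and> bs ! j) \<or> (j < i \<and> bs ! i)))"

definition spectrally_threshold_dominated :: "nat \<Rightarrow> (nat \<Rightarrow> nat \<Rightarrow> bool) \<Rightarrow> bool" where
  "spectrally_threshold_dominated n G \<longleftrightarrow>
     (\<forall>k \<in> {1..n}. \<exists>T. is_threshold n T \<and> num_edges n T = num_edges n G \<and>
        lap_sum n T k \<ge> lap_sum n G k)"

end

theory Submission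
  imports Defs "Jordan_Normal_Form.Schur_Decomposition" "HOL-Combinatorics.List_Permutation"
begin

text \<open>
  Build a threshold graph by adding nodes 0, 1, ..., n-1, where node u is dominating (joined to
  all earlier nodes) iff b u. Its Laplacian has an explicit orthogonal eigenbasis: the all-ones
  vector, and for every node j \<ge> 1 the vector that is 1 on the earlier nodes and -j on j. The
  eigenvalue of the latter is the number of dominating nodes after j, plus j + 1 if j dominates.
  The number m of edges is the sum of the dominating nodes, and summing the eigenvalues over
  any k nodes gives at most m + (k+1 choose 2), with equality for the dominating nodes
  themselves; hence every threshold graph, and every graph dominated by threshold graphs,
  satisfies the bound.

  Conversely, Laplacian eigenvalues lie in [0, n] and sum to 2m, so the k largest of them sum
  to at most min(2m, kn), and by hypothesis to at most m + (k+1 choose 2). Choosing the set of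
  dominating nodes Q \<subseteq> {1..n-1} with \<Sum>Q = m suitably (inside {1..k}, of size k, or
  containing the last k nodes) produces a threshold graph with m edges whose k largest
  eigenvalues attain this minimum.
\<close>

section \<open>Roots of products of linear factors\<close>

lemma order_prod_linear_factors:
  fixes xs :: "'a :: idom list"
  shows "Polynomial.order a (\<Prod>x\<leftarrow>xs. [:- x, 1:]) = count (mset xs) a"
proof (induction xs)
  case (Cons x xs)
  have "(\<Prod>y\<leftarrow>x # xs. [:- y, 1:]) \<noteq> 0"
    unfolding prod_list_zero_iff by auto
  then have "Polynomial.order a (\<Prod>y\<leftarrow>x # xs. [:- y, 1:])
      = Polynomial.order a [:- x, 1:] + Polynomial.order a (\<Prod>y\<leftarrow>xs. [:- y, 1:])"
    unfolding list.map prod_list.Cons by (rule order_mult)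
  then show ?case
    using Cons.IH by (simp add: order_linear')
qed simp

lemma mset_eq_if_prod_linear_factors_eq:
  fixes xs ys :: "'a :: idom list"
  assumes "(\<Prod>x\<leftarrow>xs. [:- x, 1:]) = (\<Prod>x\<leftarrow>ys. [:- x, 1:])"
  shows "mset xs = mset ys"
  by (rule multiset_eqI) (simp only: order_prod_linear_factors[symmetric] assms)

lemma sorted_wrt_ge_eq_if_mset_eq:
  fixes xs ys :: "'a :: linorder list"
  assumes "sorted_wrt (\<ge>) xs" "sorted_wrt (\<ge>) ys" "mset xs = mset ys"
  shows "xs = ys"
proof -
  have "sort (rev ys) = rev xs" "sort (rev ys) = rev ys"
    by (rule properties_for_sort; use assms in \<open>simp add: sorted_wrt_rev\<close>)+
  then show ?thesis by simp
qed

section \<open>Characteristic polynomials from eigenbases\<close>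

lemma orthogonal_rows_left_inverse:
  fixes w :: "nat \<Rightarrow> nat \<Rightarrow> 'a :: field"
  assumes orth: "\<And>j k. j < n \<Longrightarrow> k < n \<Longrightarrow> j \<noteq> k \<Longrightarrow> (\<Sum>x = 0..<n. w j x * w k x) = 0"
    and nz: "\<And>j. j < n \<Longrightarrow> (\<Sum>x = 0..<n. w j x * w j x) \<noteq> 0"
  shows "mat n n (\<lambda>(j, x). w j x / (\<Sum>y = 0..<n. w j y * w j y)) * mat n n (\<lambda>(x, j). w j x) = 1\<^sub>m n"
    (is "?Q * ?P = _")
proof (rule eq_matI)
  fix j k assume "j < dim_row (1\<^sub>m n :: 'a mat)" "k < dim_col (1\<^sub>m n :: 'a mat)"
  then have jk: "j < n" "k < n"
    by auto
  then have "(?Q * ?P) $$ (j, k) = (\<Sum>x = 0..<n. w j x * w k x) / (\<Sum>y = 0..<n. w j y * w j y)"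
    by (simp add: scalar_prod_def sum_divide_distrib)
  also have "\<dots> = 1\<^sub>m n $$ (j, k)"
    using orth[OF jk] nz[OF jk(1)] jk by auto
  finally show "(?Q * ?P) $$ (j, k) = 1\<^sub>m n $$ (j, k)" .
qed auto

lemma char_poly_orthogonal_eigenbasis:
  fixes A :: "'a :: field mat" and w :: "nat \<Rightarrow> nat \<Rightarrow> 'a" and mu :: "nat \<Rightarrow> 'a"
  assumes A: "A \<in> carrier_mat n n"
    and eig: "\<And>j x. j < n \<Longrightarrow> x < n \<Longrightarrow> (\<Sum>y = 0..<n. A $$ (x, y) * w j y) = mu j * w j x"
    and orth: "\<And>j k. j < n \<Longrightarrow> k < n \<Longrightarrow> j \<noteq> k \<Longrightarrow> (\<Sum>x = 0..<n. w j x * w k x) = 0"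
    and nz: "\<And>j. j < n \<Longrightarrow> (\<Sum>x = 0..<n. w j x * w j x) \<noteq> 0"
  shows "char_poly A = (\<Prod>j\<leftarrow>[0..<n]. [:- mu j, 1:])"
proof -
  define P where "P = mat n n (\<lambda>(x, j). w j x)"
  define Q where "Q = mat n n (\<lambda>(j, x). w j x / (\<Sum>y = 0..<n. w j y * w j y))"
  define D where "D = mat n n (\<lambda>(i, j). if i = j then mu i else 0)"
  have PQD: "P \<in> carrier_mat n n" "Q \<in> carrier_mat n n" "D \<in> carrier_mat n n"
    unfolding P_def Q_def D_def by auto
  have QP: "Q * P = 1\<^sub>m n"
    unfolding P_def Q_def by (rule orthogonal_rows_left_inverse[OF orth nz])
  have PQ: "P * Q = 1\<^sub>m n"
    by (rule mat_mult_left_right_inverse[OF PQD(2,1) QP])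
  have AP: "A * P = P * D"
  proof (rule eq_matI)
    fix x j assume "x < dim_row (P * D)" "j < dim_col (P * D)"
    then have xj: "x < n" "j < n"
      using PQD by auto
    have "(A * P) $$ (x, j) = mu j * w j x"
      using xj A eig[OF xj(2,1)] unfolding P_def by (simp add: scalar_prod_def)
    also have "\<dots> = (P * D) $$ (x, j)"
      using xj unfolding P_def D_def by (simp add: scalar_prod_def if_distrib cong: if_cong)
    finally show "(A * P) $$ (x, j) = (P * D) $$ (x, j)" .
  qed (use A PQD in auto)
  have "A = P * D * Q"
    using A PQD by (metis AP PQ assoc_mult_mat right_mult_one_mat)
  then have "char_poly A = char_poly D"
    using A PQD PQ QP by (intro char_poly_similar similar_matI[of A D P Q n]) auto
  also have "\<dots> = (\<Prod>a\<leftarrow>diag_mat D. [:- a, 1:])"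
    by (rule char_poly_upper_triangular[OF PQD(3)]) (auto simp: upper_triangular_def D_def)
  also have "diag_mat D = map mu [0..<n]"
    unfolding diag_mat_def D_def by simp
  finally show ?thesis
    by (simp add: o_def)
qed

lemma diag_sum_mult_commute:
  fixes X Y :: "'a :: comm_ring_1 mat"
  assumes "X \<in> carrier_mat n n" "Y \<in> carrier_mat n n"
  shows "(\<Sum>i = 0..<n. (X * Y) $$ (i,i)) = (\<Sum>i = 0..<n. (Y * X) $$ (i,i))"
proof -
  have "(\<Sum>i = 0..<n. (X * Y) $$ (i,i)) = (\<Sum>i = 0..<n. \<Sum>k = 0..<n. X $$ (i,k) * Y $$ (k,i))"
    using assms by (intro sum.cong refl) (simp add: scalar_prod_def)
  also have "\<dots> = (\<Sum>k = 0..<n. \<Sum>i = 0..<n. Y $$ (k,i) * X $$ (i,k))"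
    by (subst sum.swap) (simp add: mult.commute)
  also have "\<dots> = (\<Sum>k = 0..<n. (Y * X) $$ (k,k))"
    using assms by (intro sum.cong refl) (simp add: scalar_prod_def)
  finally show ?thesis .
qed

lemma diag_sum_similar:
  fixes A B :: "'a :: comm_ring_1 mat"
  assumes "similar_mat A B" "A \<in> carrier_mat n n"
  shows "(\<Sum>i = 0..<n. A $$ (i,i)) = (\<Sum>i = 0..<n. B $$ (i,i))"
proof -
  obtain n' P Q where PQ: "{A, B, P, Q} \<subseteq> carrier_mat n' n'" "Q * P = 1\<^sub>m n'" "A = P * B * Q"
    using similar_matD[OF assms(1)] by blast
  then have PBQ: "P \<in> carrier_mat n n" "B \<in> carrier_mat n n" "Q \<in> carrier_mat n n"
    using assms(2) by auto
  have "n' = n"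
    using PQ(1) assms(2) by auto
  have "A = P * (B * Q)"
    using PQ(3) PBQ by simp
  then have "(\<Sum>i = 0..<n. A $$ (i,i)) = (\<Sum>i = 0..<n. (B * Q * P) $$ (i,i))"
    using diag_sum_mult_commute[of P n "B * Q"] PBQ by (simp only: mult_carrier_mat)
  also have "B * Q * P = B"
    using PQ(2) PBQ \<open>n' = n\<close> by (simp add: assoc_mult_mat[of B n n Q n P n])
  finally show ?thesis .
qed

lemma sum_roots_char_poly_eq_diag_sum:
  fixes A :: "real mat"
  assumes A: "A \<in> carrier_mat n n" and cp: "char_poly A = (\<Prod>x\<leftarrow>xs. [:- x, 1:])"
  shows "sum_list xs = (\<Sum>i = 0..<n. A $$ (i,i))"
proof -
  define B where "B = schur_upper_triangular A xs"
  have B: "B \<in> carrier_mat n n" "upper_triangular B" "similar_mat A B"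
    using schur_upper_triangular[OF A cp] unfolding B_def by auto
  have "(\<Prod>x\<leftarrow>diag_mat B. [:- x, 1:]) = (\<Prod>x\<leftarrow>xs. [:- x, 1:])"
    using char_poly_upper_triangular[OF B(1,2)] char_poly_similar[OF B(3)] cp by simp
  then have "mset (diag_mat B) = mset xs"
    by (rule mset_eq_if_prod_linear_factors_eq)
  then have "sum_list xs = sum_list (diag_mat B)"
    unfolding sum_mset_sum_list[symmetric] by simp
  also have "\<dots> = (\<Sum>i = 0..<n. B $$ (i,i))"
    using B(1) unfolding diag_mat_def by (simp add: sum_list_sum_nth)
  also have "\<dots> = (\<Sum>i = 0..<n. A $$ (i,i))"
    using diag_sum_similar[OF B(3) A] by simp
  finally show ?thesis .
qed

section \<open>The Laplacian spectrum\<close>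

lemma lap_eigs_eq_rev_sort:
  assumes "length zs = n" "char_poly (laplacian n A) = (\<Prod>x\<leftarrow>zs. [:- x, 1:])"
  shows "lap_eigs n A = rev (sort zs)"
  unfolding lap_eigs_def
proof (rule the_equality)
  have "(\<Prod>x\<leftarrow>rev (sort zs). [:- x, 1:]) = (\<Prod>x\<leftarrow>zs. [:- x, 1:])"
    unfolding prod_mset_prod_list[symmetric] by simp
  then show "length (rev (sort zs)) = n \<and> sorted_wrt (\<ge>) (rev (sort zs)) \<and>
      char_poly (laplacian n A) = (\<Prod>x\<leftarrow>rev (sort zs). [:- x, 1:])"
    using assms by (simp add: sorted_wrt_rev)
next
  fix ys assume ys: "length ys = n \<and> sorted_wrt (\<ge>) ys \<and> char_poly (laplacian n A) = (\<Prod>x\<leftarrow>ys. [:- x, 1:])"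
  then have "mset ys = mset zs"
    using assms(2) by (intro mset_eq_if_prod_linear_factors_eq) simp
  then show "ys = rev (sort zs)"
    using ys by (intro sorted_wrt_ge_eq_if_mset_eq) (auto simp: sorted_wrt_rev)
qed

lemma laplacian_carrier_mat [simp]: "laplacian n A \<in> carrier_mat n n"
  unfolding laplacian_def by simp

lemma degree_eq_card: "degree n A x = card {y \<in> {0..<n}. A x y}"
  unfolding degree_def by (metis atLeastLessThan_iff zero_le)

lemma laplacian_mult:
  fixes f :: "nat \<Rightarrow> 'a :: real_algebra_1"
  assumes "x < n"
  shows "(\<Sum>y = 0..<n. of_real (laplacian n A $$ (x, y)) * f y)
       = (\<Sum>y = 0..<n. if A x y then f x - f y else 0)"
proof -
  have "(\<Sum>y = 0..<n. of_real (laplacian n A $$ (x, y)) * f y)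
      = (\<Sum>y = 0..<n. (if x = y then of_nat (degree n A x) * f x else 0) - (if A x y then f y else 0))"
    using assms by (intro sum.cong refl) (auto simp: laplacian_def algebra_simps)
  also have "\<dots> = of_nat (degree n A x) * f x - (\<Sum>y = 0..<n. if A x y then f y else 0)"
    using assms by (simp add: sum_subtractf)
  also have "of_nat (degree n A x) * f x = (\<Sum>y = 0..<n. if A x y then f x else 0)"
    unfolding degree_eq_card by (simp add: sum.If_cases Int_def)
  finally show ?thesis
    by (simp add: sum_subtractf[symmetric] if_distrib cong: if_cong)
qed

lemma sum_degree_eq_twice_num_edges:
  assumes "is_graph n A"
  shows "(\<Sum>i = 0..<n. degree n A i) = 2 * num_edges n A"
proof -
  define E where "E = {(i, j). i < j \<and> j < n \<and> A i j}"
  have fin: "finite E"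
    unfolding E_def by (rule finite_subset[of _ "{0..<n} \<times> {0..<n}"]) auto
  have "(\<Sum>i = 0..<n. degree n A i) = card (Sigma {0..<n} (\<lambda>i. {j. j < n \<and> A i j}))"
    unfolding degree_def by (rule card_SigmaI[symmetric]) auto
  also have "Sigma {0..<n} (\<lambda>i. {j. j < n \<and> A i j}) = E \<union> prod.swap ` E"
    using assms unfolding E_def is_graph_def by (auto simp: image_iff) (metis linorder_neqE_nat)
  also have "card (E \<union> prod.swap ` E) = card E + card (prod.swap ` E)"
    by (rule card_Un_disjoint) (use fin in \<open>auto simp: E_def\<close>)
  also have "card (prod.swap ` E) = card E"
    by (rule card_image) simp
  finally show ?thesis
    unfolding num_edges_def E_def by simp
qed

lemma sum_roots_laplacian:
  assumes "is_graph n A" and "char_poly (laplacian n A) = (\<Prod>x\<leftarrow>xs. [:- x, 1:])"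
  shows "sum_list xs = 2 * real (num_edges n A)"
proof -
  have "sum_list xs = (\<Sum>i = 0..<n. laplacian n A $$ (i, i))"
    by (rule sum_roots_char_poly_eq_diag_sum) (use assms in auto)
  also have "\<dots> = (\<Sum>i = 0..<n. real (degree n A i))"
    using assms(1) by (intro sum.cong refl) (auto simp: laplacian_def is_graph_def)
  finally show ?thesis
    using sum_degree_eq_twice_num_edges[OF assms(1)] by (metis of_nat_mult of_nat_numeral of_nat_sum)
qed

lemma char_poly_laplacian_relabelled_eigenbasis:
  fixes \<sigma> :: "nat \<Rightarrow> nat" and g :: "nat \<Rightarrow> nat \<Rightarrow> real" and mu :: "nat \<Rightarrow> real"
  assumes \<sigma>: "bij_betw \<sigma> {0..<n} {0..<n}"
    and eig: "\<And>j i. j < n \<Longrightarrow> i < n \<Longrightarrow>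
      (\<Sum>q = 0..<n. if A (\<sigma> i) (\<sigma> q) then g j i - g j q else 0) = mu j * g j i"
    and orth: "\<And>j k. j < n \<Longrightarrow> k < n \<Longrightarrow> j \<noteq> k \<Longrightarrow> (\<Sum>q = 0..<n. g j q * g k q) = 0"
    and nz: "\<And>j. j < n \<Longrightarrow> (\<Sum>q = 0..<n. g j q * g j q) \<noteq> 0"
  shows "char_poly (laplacian n A) = (\<Prod>j\<leftarrow>[0..<n]. [:- mu j, 1:])"
proof -
  define \<tau> where "\<tau> = inv_into {0..<n} \<sigma>"
  have \<tau>: "\<tau> x < n" "\<sigma> (\<tau> x) = x" if "x < n" for x
    using that bij_betw_inv_into_right[OF \<sigma>] bij_betw_apply[OF bij_betw_inv_into[OF \<sigma>]]
    unfolding \<tau>_def by auto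
  have \<tau>\<sigma>: "\<tau> (\<sigma> q) = q" if "q < n" for q
    using that bij_betw_inv_into_left[OF \<sigma>] unfolding \<tau>_def by auto
  have reindex: "(\<Sum>x = 0..<n. h (\<tau> x)) = (\<Sum>q = 0..<n. h q)" for h :: "nat \<Rightarrow> real"
    using sum.reindex_bij_betw[OF \<sigma>, of "\<lambda>x. h (\<tau> x)"] \<tau>\<sigma> by simp
  show ?thesis
  proof (rule char_poly_orthogonal_eigenbasis[where w = "\<lambda>j x. g j (\<tau> x)"])
    fix j x assume jx: "j < n" "x < n"
    have "(\<Sum>y = 0..<n. laplacian n A $$ (x, y) * g j (\<tau> y))
        = (\<Sum>y = 0..<n. if A x y then g j (\<tau> x) - g j (\<tau> y) else 0)"
      using laplacian_mult[OF jx(2), of A "\<lambda>y. g j (\<tau> y)"] by simp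
    also have "\<dots> = (\<Sum>y = 0..<n. if A (\<sigma> (\<tau> x)) (\<sigma> (\<tau> y)) then g j (\<tau> x) - g j (\<tau> y) else 0)"
      using \<tau> jx(2) by (intro sum.cong) auto
    also have "\<dots> = mu j * g j (\<tau> x)"
      using reindex[of "\<lambda>q. if A (\<sigma> (\<tau> x)) (\<sigma> q) then g j (\<tau> x) - g j q else 0"]
        eig[OF jx(1) \<tau>(1)[OF jx(2)]]
      by simp
    finally show "(\<Sum>y = 0..<n. laplacian n A $$ (x, y) * g j (\<tau> y)) = mu j * g j (\<tau> x)" .
  next
    fix j k assume "j < n" "k < n" "j \<noteq> k"
    then show "(\<Sum>x = 0..<n. g j (\<tau> x) * g k (\<tau> x)) = 0"
      using reindex[of "\<lambda>q. g j q * g k q"] orth by simp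
  next
    fix j assume "j < n"
    then show "(\<Sum>x = 0..<n. g j (\<tau> x) * g j (\<tau> x)) \<noteq> 0"
      using reindex[of "\<lambda>q. g j q * g j q"] nz by simp
  qed simp
qed

lemma laplacian_quadratic_form:
  fixes f :: "nat \<Rightarrow> complex"
  assumes g: "is_graph n A"
  shows "2 * (\<Sum>x = 0..<n. cnj (f x) * (\<Sum>y = 0..<n. if A x y then f x - f y else 0))
       = of_real (\<Sum>x = 0..<n. \<Sum>y = 0..<n. if A x y then (cmod (f x - f y))^2 else 0)"
proof -
  define X where "X = (\<Sum>x = 0..<n. \<Sum>y = 0..<n. if A x y then cnj (f x) * (f x - f y) else 0)"
  have X1: "(\<Sum>x = 0..<n. cnj (f x) * (\<Sum>y = 0..<n. if A x y then f x - f y else 0)) = X"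
    unfolding X_def sum_distrib_left by (rule sum.cong, simp, rule sum.cong, auto)
  have "X = (\<Sum>y = 0..<n. \<Sum>x = 0..<n. if A x y then cnj (f x) * (f x - f y) else 0)"
    unfolding X_def by (rule sum.swap)
  also have "\<dots> = (\<Sum>x = 0..<n. \<Sum>y = 0..<n. if A x y then cnj (f y) * (f y - f x) else 0)"
    using g unfolding is_graph_def by (intro sum.cong refl) auto
  finally have X2: "X = (\<Sum>x = 0..<n. \<Sum>y = 0..<n. if A x y then cnj (f y) * (f y - f x) else 0)" .
  have "2 * X = X + X"
    by simp
  also have "\<dots> = (\<Sum>x = 0..<n. \<Sum>y = 0..<n. if A x y then cnj (f x) * (f x - f y) + cnj (f y) * (f y - f x) else 0)"
    by (subst X_def, subst X2) (simp add: sum.distrib[symmetric] if_distrib cong: if_cong)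
  also have "\<dots> = (\<Sum>x = 0..<n. \<Sum>y = 0..<n. of_real (if A x y then (cmod (f x - f y))^2 else 0))"
  proof (intro sum.cong refl)
    fix x y
    have "cnj (f x) * (f x - f y) + cnj (f y) * (f y - f x) = (f x - f y) * cnj (f x - f y)"
      by (simp add: algebra_simps)
    also have "\<dots> = of_real ((cmod (f x - f y))^2)"
      by (rule complex_norm_square[symmetric])
    finally show "(if A x y then cnj (f x) * (f x - f y) + cnj (f y) * (f y - f x) else 0)
        = of_real (if A x y then (cmod (f x - f y))^2 else 0)"
      by simp
  qed
  also have "\<dots> = of_real (\<Sum>x = 0..<n. \<Sum>y = 0..<n. if A x y then (cmod (f x - f y))^2 else 0)"
    by (simp add: of_real_sum)
  finally show ?thesis
    unfolding X1 .
qed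

lemma sum_cmod_diff_squared:
  fixes f :: "nat \<Rightarrow> complex"
  shows "(\<Sum>x = 0..<n. \<Sum>y = 0..<n. (cmod (f x - f y))^2)
       = 2 * real n * (\<Sum>x = 0..<n. (cmod (f x))^2) - 2 * (cmod (\<Sum>x = 0..<n. f x))^2"
proof -
  have diff: "(cmod (a - b))^2 = (cmod a)^2 + (cmod b)^2 - 2 * Re (a * cnj b)" for a b :: complex
    unfolding cmod_power2 by (simp add: power2_diff algebra_simps)
  have "(\<Sum>x = 0..<n. \<Sum>y = 0..<n. Re (f x * cnj (f y))) = Re ((\<Sum>x = 0..<n. f x) * cnj (\<Sum>x = 0..<n. f x))"
    by (simp add: sum_product cnj_sum Re_sum)
  also have "\<dots> = (cmod (\<Sum>x = 0..<n. f x))^2"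
    by (simp only: complex_norm_square[symmetric] Re_complex_of_real)
  finally have cross: "(\<Sum>x = 0..<n. \<Sum>y = 0..<n. Re (f x * cnj (f y))) = (cmod (\<Sum>x = 0..<n. f x))^2" .
  show ?thesis
    unfolding diff sum_subtractf sum.distrib sum_distrib_left[symmetric] cross
    by (simp add: sum_distrib_left[symmetric])
qed

text \<open>Rayleigh quotient: 2 z \<parallel>f\<parallel>^2 is the sum of |f x - f y|^2 over the ordered pairs of
  adjacent nodes, which is at most the same sum over all pairs, 2 n \<parallel>f\<parallel>^2 - 2 |\<Sum>x. f x|^2.\<close>

lemma laplacian_eigenvalue_real_bounded:
  fixes f :: "nat \<Rightarrow> complex"
  assumes g: "is_graph n A" and nz: "x0 < n" "f x0 \<noteq> 0"
    and eig: "\<And>x. x < n \<Longrightarrow> (\<Sum>y = 0..<n. if A x y then f x - f y else 0) = z * f x"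
  shows "\<exists>r. z = of_real r \<and> 0 \<le> r \<and> r \<le> real n"
proof -
  define N where "N = (\<Sum>x = 0..<n. (cmod (f x))^2)"
  define Q where "Q = (\<Sum>x = 0..<n. \<Sum>y = 0..<n. if A x y then (cmod (f x - f y))^2 else 0)"
  have "(\<Sum>x = 0..<n. cnj (f x) * (z * f x)) = z * of_real N"
    unfolding N_def of_real_sum sum_distrib_left
    by (intro sum.cong refl) (simp only: complex_norm_square, simp add: mult_ac)
  moreover have "2 * (\<Sum>x = 0..<n. cnj (f x) * (z * f x)) = of_real Q"
    unfolding Q_def using laplacian_quadratic_form[OF g, of f] eig by simp
  ultimately have zN: "2 * z * of_real N = of_real Q"
    by (simp add: mult.assoc)
  have "(cmod (f x0))^2 \<le> N"
    unfolding N_def by (rule member_le_sum) (use nz in auto)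
  moreover have "0 < (cmod (f x0))^2"
    using nz by simp
  ultimately have N: "N > 0"
    by linarith
  have "0 \<le> Q"
    unfolding Q_def by (intro sum_nonneg) auto
  moreover have "Q \<le> 2 * real n * N"
  proof -
    have "Q \<le> (\<Sum>x = 0..<n. \<Sum>y = 0..<n. (cmod (f x - f y))^2)"
      unfolding Q_def by (intro sum_mono) auto
    also have "\<dots> \<le> 2 * real n * N"
      unfolding N_def sum_cmod_diff_squared by simp
    finally show ?thesis .
  qed
  moreover have "z = of_real (Q / (2 * N))"
    using zN N by (simp add: field_simps)
  ultimately show ?thesis
    using N by (intro exI[of _ "Q / (2 * N)"]) (simp add: field_simps)
qed

lemma laplacian_char_poly_root_real_bounded:
  assumes g: "is_graph n A"
    and z: "poly (char_poly (map_mat complex_of_real (laplacian n A))) z = 0"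
  shows "\<exists>r. z = of_real r \<and> 0 \<le> r \<and> r \<le> real n"
proof -
  define L where "L = map_mat complex_of_real (laplacian n A)"
  have L: "L \<in> carrier_mat n n"
    unfolding L_def by simp
  have "eigenvalue L z"
    using z eigenvalue_root_char_poly[OF L] unfolding L_def by simp
  then obtain v where v: "v \<in> carrier_vec n" "v \<noteq> 0\<^sub>v n" "L *\<^sub>v v = z \<cdot>\<^sub>v v"
    using L unfolding eigenvalue_def eigenvector_def by auto
  obtain x0 where "x0 < n" "v $ x0 \<noteq> 0"
    using v(1,2) by (metis carrier_vecD eq_vecI index_zero_vec)
  moreover have "(\<Sum>y = 0..<n. if A x y then v $ x - v $ y else 0) = z * v $ x" if "x < n" for x
  proof -
    have "(L *\<^sub>v v) $ x = (\<Sum>y = 0..<n. complex_of_real (laplacian n A $$ (x, y)) * v $ y)"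
      using that v(1) unfolding L_def laplacian_def by (simp add: scalar_prod_def)
    then show ?thesis
      using v(1,3) that laplacian_mult[OF that, of A "\<lambda>y. v $ y"] by simp
  qed
  ultimately show ?thesis
    by (rule laplacian_eigenvalue_real_bounded[OF g])
qed

lemma laplacian_char_poly_real_factors:
  assumes g: "is_graph n A"
  obtains rs where "length rs = n" "char_poly (laplacian n A) = (\<Prod>x\<leftarrow>rs. [:- x, 1:])"
    "\<And>r. r \<in> set rs \<Longrightarrow> 0 \<le> r \<and> r \<le> real n"
proof -
  define L where "L = laplacian n A"
  interpret h: map_poly_inj_idom_hom "of_real :: real \<Rightarrow> complex" ..
  have L: "map_mat complex_of_real L \<in> carrier_mat n n"
    unfolding L_def by simp
  obtain zs where zs: "char_poly (map_mat complex_of_real L) = (\<Prod>a\<leftarrow>zs. [:- a, 1:])" "length zs = n"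
    using char_poly_factorized[OF L] by blast
  have root: "\<exists>r. z = of_real r \<and> 0 \<le> r \<and> r \<le> real n" if "z \<in> set zs" for z
    using that zs(1) laplacian_char_poly_root_real_bounded[OF g, of z]
    unfolding L_def by (simp add: poly_prod_list prod_list_zero_iff)
  define rs where "rs = map Re zs"
  have zs_rs: "zs = map complex_of_real rs"
    unfolding rs_def by (rule nth_equalityI) (auto dest!: nth_mem[THEN root])
  have "char_poly (map_mat complex_of_real L) = map_poly of_real (char_poly L)"
    by (rule of_real_hom.char_poly_hom[of _ n]) (simp add: L_def)
  then have "map_poly of_real (char_poly L) = (\<Prod>a\<leftarrow>map complex_of_real rs. [:- a, 1:])"
    using zs(1) zs_rs by simp
  also have "\<dots> = map_poly of_real (\<Prod>a\<leftarrow>rs. [:- a, 1:])"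
    by (simp add: h.hom_prod_list o_def)
  finally have "char_poly L = (\<Prod>a\<leftarrow>rs. [:- a, 1:])"
    by (rule h.injectivity)
  moreover have "0 \<le> r \<and> r \<le> real n" if "r \<in> set rs" for r
    using root[of "of_real r"] that zs_rs by auto
  moreover have "length rs = n"
    using zs(2) unfolding rs_def by simp
  ultimately show ?thesis
    using that unfolding L_def by blast
qed

lemma lap_eigs_properties:
  assumes "is_graph n A"
  shows "length (lap_eigs n A) = n" and "sorted_wrt (\<ge>) (lap_eigs n A)"
    and "\<And>x. x \<in> set (lap_eigs n A) \<Longrightarrow> 0 \<le> x \<and> x \<le> real n"
    and "sum_list (lap_eigs n A) = 2 * real (num_edges n A)"
proof -
  obtain rs where rs: "length rs = n" "char_poly (laplacian n A) = (\<Prod>x\<leftarrow>rs. [:- x, 1:])"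
    "\<And>r. r \<in> set rs \<Longrightarrow> 0 \<le> r \<and> r \<le> real n"
    using laplacian_char_poly_real_factors[OF assms] by blast
  have eigs: "lap_eigs n A = rev (sort rs)"
    by (rule lap_eigs_eq_rev_sort[OF rs(1,2)])
  show "length (lap_eigs n A) = n" "sorted_wrt (\<ge>) (lap_eigs n A)"
    unfolding eigs using rs(1) by (simp_all add: sorted_wrt_rev)
  show "0 \<le> x \<and> x \<le> real n" if "x \<in> set (lap_eigs n A)" for x
    using that rs(3) unfolding eigs by simp
  have "sum_list (lap_eigs n A) = sum_list rs"
    unfolding eigs by (simp flip: sum_mset_sum_list)
  also have "\<dots> = 2 * real (num_edges n A)"
    by (rule sum_roots_laplacian[OF assms rs(2)])
  finally show "sum_list (lap_eigs n A) = 2 * real (num_edges n A)" .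
qed

lemma lap_sum_le_twice_num_edges:
  assumes "is_graph n A" "k \<le> n"
  shows "lap_sum n A k \<le> 2 * real (num_edges n A)"
proof -
  note eigs = lap_eigs_properties[OF assms(1)]
  have "lap_sum n A k \<le> (\<Sum>i<n. lap_eigs n A ! i)"
    unfolding lap_sum_def using assms(2) eigs(1,3)
    by (intro sum_mono2) (auto dest: nth_mem)
  also have "\<dots> = 2 * real (num_edges n A)"
    using eigs(1,4) by (simp add: sum_list_sum_nth atLeast0LessThan)
  finally show ?thesis .
qed

lemma lap_sum_le_mult:
  assumes "is_graph n A" "k \<le> n"
  shows "lap_sum n A k \<le> real k * real n"
proof -
  note eigs = lap_eigs_properties[OF assms(1)]
  have "lap_sum n A k \<le> (\<Sum>i<k. real n)"
    unfolding lap_sum_def using assms(2) eigs(1,3)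
    by (intro sum_mono) (auto dest: nth_mem)
  then show ?thesis
    by simp
qed

section \<open>Sums of the largest entries of a list\<close>

lemma sum_subset_le_sum_take:
  fixes xs :: "'a :: {ordered_comm_monoid_add, linorder} list"
  assumes sorted: "sorted_wrt (\<ge>) xs" and nonneg: "\<And>x. x \<in> set xs \<Longrightarrow> 0 \<le> x"
    and I: "I \<subseteq> {..<length xs}" "card I \<le> k" and k: "k \<le> length xs"
  shows "(\<Sum>i\<in>I. xs ! i) \<le> (\<Sum>i<k. xs ! i)"
proof -
  define ix where "ix = sorted_list_of_set I"
  have fin: "finite I"
    using I(1) finite_subset by blast
  have ix: "sorted_wrt (<) ix" "distinct ix" "set ix = I" "length ix = card I"
    using fin unfolding ix_def by auto
  have "(\<Sum>i\<in>I. xs ! i) = sum_list (map ((!) xs) ix)"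
    using ix by (simp add: sum_list_distinct_conv_sum_set)
  also have "\<dots> = (\<Sum>j<card I. xs ! (ix ! j))"
    using ix by (simp add: sum_list_sum_nth atLeast0LessThan)
  also have "\<dots> \<le> (\<Sum>j<card I. xs ! j)"
  proof (rule sum_mono)
    fix j assume j: "j \<in> {..<card I}"
    then have "j \<le> ix ! j" "ix ! j < length xs"
      using ix sorted_wrt_less_idx[of "ix" j] I(1) nth_mem[of j "ix"] by auto
    then show "xs ! (ix ! j) \<le> xs ! j"
      using sorted_wrt_nth_less[OF sorted, of j "ix ! j"] by (cases "j = ix ! j") auto
  qed
  also have "\<dots> \<le> (\<Sum>j<k. xs ! j)"
    using I(2) k nonneg by (intro sum_mono2) (auto dest: nth_mem)
  finally show ?thesis .
qed

lemma obtain_index_bij: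
  assumes "mset xs = mset (map f [0..<n])"
  obtains p where "bij_betw p {..<n} {..<n}" "\<And>i. i < n \<Longrightarrow> xs ! i = f (p i)"
proof -
  have len: "length xs = n"
    using mset_eq_length[OF assms] by simp
  obtain p where p: "bij_betw p {..<length xs} {..<length (map f [0..<n])}"
      "\<And>i. i < length xs \<Longrightarrow> xs ! i = map f [0..<n] ! p i"
    using permutation_Ex_bij[OF assms] by blast
  have "bij_betw p {..<n} {..<n}"
    using p(1) len by simp
  moreover have "xs ! i = f (p i)" if "i < n" for i
    using p len that bij_betw_apply[OF \<open>bij_betw p {..<n} {..<n}\<close>, of i] by simp
  ultimately show ?thesis
    using that by blast
qed

lemma sum_take_eq_sum_subset:
  assumes "mset xs = mset (map f [0..<n])" "k \<le> n"
  obtains S where "S \<subseteq> {..<n}" "card S = k" "(\<Sum>i<k. xs ! i) = (\<Sum>j\<in>S. f j)"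
proof -
  obtain p where p: "bij_betw p {..<n} {..<n}" "\<And>i. i < n \<Longrightarrow> xs ! i = f (p i)"
    using obtain_index_bij[OF assms(1)] by blast
  have inj: "inj_on p {..<k}"
    by (rule inj_on_subset[OF bij_betw_imp_inj_on[OF p(1)]]) (use assms(2) in auto)
  have "(\<Sum>i<k. xs ! i) = (\<Sum>j\<in>p ` {..<k}. f j)"
    using assms(2) p(2) by (simp add: sum.reindex[OF inj])
  moreover have "p ` {..<k} \<subseteq> {..<n}"
    using bij_betw_imp_surj_on[OF p(1)] assms(2) by auto
  ultimately show ?thesis
    using that card_image[OF inj] by auto
qed

lemma sum_subset_le_sum_take_mset:
  fixes xs :: "'a :: {ordered_comm_monoid_add, linorder} list"
  assumes m: "mset xs = mset (map f [0..<n])" and sorted: "sorted_wrt (\<ge>) xs"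
    and nonneg: "\<And>x. x \<in> set xs \<Longrightarrow> 0 \<le> x"
    and S: "S \<subseteq> {..<n}" "card S \<le> k" and k: "k \<le> n"
  shows "(\<Sum>j\<in>S. f j) \<le> (\<Sum>i<k. xs ! i)"
proof -
  obtain p where p: "bij_betw p {..<n} {..<n}" "\<And>i. i < n \<Longrightarrow> xs ! i = f (p i)"
    using obtain_index_bij[OF m] by blast
  define I where "I = {i \<in> {..<n}. p i \<in> S}"
  have inj: "inj_on p I"
    using bij_betw_imp_inj_on[OF p(1)] unfolding I_def by (rule inj_on_subset) auto
  have img: "p ` I = S"
  proof
    show "S \<subseteq> p ` I"
    proof
      fix j assume "j \<in> S"
      moreover obtain i where "i < n" "j = p i"
        using \<open>j \<in> S\<close> S(1) bij_betw_imp_surj_on[OF p(1)] by (metis imageE lessThan_iff subsetD)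
      ultimately show "j \<in> p ` I"
        unfolding I_def by auto
    qed
  qed (auto simp: I_def)
  have "(\<Sum>j\<in>S. f j) = (\<Sum>i\<in>I. xs ! i)"
    unfolding img[symmetric] sum.reindex[OF inj] by (auto simp: I_def p(2) intro: sum.cong)
  also have "\<dots> \<le> (\<Sum>i<k. xs ! i)"
    using S(2) k mset_eq_length[OF m] card_image[OF inj] img
    by (intro sum_subset_le_sum_take[OF sorted nonneg]) (auto simp: I_def)
  finally show ?thesis .
qed

section \<open>The Laplacian spectrum of a threshold graph\<close>

definition thr_adj :: "(nat \<Rightarrow> bool) \<Rightarrow> nat \<Rightarrow> nat \<Rightarrow> bool" where
  "thr_adj b i j \<longleftrightarrow> (i < j \<and> b j) \<or> (j < i \<and> b i)"

definition count_after :: "(nat \<Rightarrow> bool) \<Rightarrow> nat \<Rightarrow> nat \<Rightarrow> nat" where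
  "count_after b n j = card {u \<in> {Suc j..<n}. b u}"

text \<open>Nodes are added in the order 0, 1, ..., n - 1, and node u is dominating iff b u (so b 0 is
  irrelevant). Node j \<ge> 1 carries the eigenvalue thr_eig b n j with eigenvector thr_eigvec j;
  node 0 carries the eigenvalue 0 of the constant vector.\<close>

definition thr_eig :: "(nat \<Rightarrow> bool) \<Rightarrow> nat \<Rightarrow> nat \<Rightarrow> nat" where
  "thr_eig b n j = (if j = 0 then 0 else count_after b n j + (if b j then j + 1 else 0))"

definition thr_eigvec :: "nat \<Rightarrow> nat \<Rightarrow> real" where
  "thr_eigvec j q = (if j = 0 then 1 else if q < j then 1 else if q = j then - real j else 0)"

lemma sum_split_at:
  fixes F :: "nat \<Rightarrow> 'a :: comm_monoid_add"
  assumes "j < n"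
  shows "(\<Sum>q = 0..<n. F q) = (\<Sum>q = 0..<j. F q) + F j + (\<Sum>q = Suc j..<n. F q)"
  using sum.atLeastLessThan_concat[of 0 "Suc j" n F] assms by simp

lemma count_after_sum: "(\<Sum>q = Suc j..<n. if b q then (c::real) else 0) = real (count_after b n j) * c"
  unfolding count_after_def by (simp add: sum.If_cases Int_def)

lemma thr_eigvec_eigen:
  assumes j: "j < n" and i: "i < n"
  shows "(\<Sum>q = 0..<n. if thr_adj b i q then thr_eigvec j i - thr_eigvec j q else 0) = real (thr_eig b n j) * thr_eigvec j i"
proof (cases "j = 0")
  case True
  then show ?thesis
    by (simp add: thr_eigvec_def thr_eig_def)
next
  case False
  let ?F = "\<lambda>q. if thr_adj b i q then thr_eigvec j i - thr_eigvec j q else 0"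
  have split: "(\<Sum>q = 0..<n. ?F q) = (\<Sum>q = 0..<j. ?F q) + ?F j + (\<Sum>q = Suc j..<n. ?F q)"
    by (rule sum_split_at[OF j])
  consider "j < i" | "i < j" | "i = j"
    by linarith
  then show ?thesis
  proof cases
    case 1
    have below: "(\<Sum>q = 0..<j. ?F q) = (\<Sum>q = 0..<j. if b i then -1 else 0)"
      by (rule sum.cong) (use 1 False in \<open>auto simp: thr_adj_def thr_eigvec_def\<close>)
    have above: "(\<Sum>q = Suc j..<n. ?F q) = 0"
      by (rule sum.neutral) (use 1 False in \<open>auto simp: thr_adj_def thr_eigvec_def\<close>)
    have at: "?F j = (if b i then real j else 0)"
      using 1 False by (auto simp: thr_adj_def thr_eigvec_def)
    show ?thesis
      unfolding split below above at using 1 False by (simp add: thr_eigvec_def)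
  next
    case 2
    have below: "(\<Sum>q = 0..<j. ?F q) = 0"
      by (rule sum.neutral) (use 2 False in \<open>auto simp: thr_adj_def thr_eigvec_def\<close>)
    have above: "(\<Sum>q = Suc j..<n. ?F q) = (\<Sum>q = Suc j..<n. if b q then 1 else 0)"
      by (rule sum.cong) (use 2 False in \<open>auto simp: thr_adj_def thr_eigvec_def\<close>)
    have at: "?F j = (if b j then real j + 1 else 0)"
      using 2 False by (auto simp: thr_adj_def thr_eigvec_def)
    show ?thesis
      unfolding split below above at count_after_sum using 2 False by (simp add: thr_eigvec_def thr_eig_def)
  next
    case 3
    have below: "(\<Sum>q = 0..<j. ?F q) = (\<Sum>q = 0..<j. if b j then - real j - 1 else 0)"
      by (rule sum.cong) (use 3 False in \<open>auto simp: thr_adj_def thr_eigvec_def\<close>)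
    have above: "(\<Sum>q = Suc j..<n. ?F q) = (\<Sum>q = Suc j..<n. if b q then - real j else 0)"
      by (rule sum.cong) (use 3 False in \<open>auto simp: thr_adj_def thr_eigvec_def\<close>)
    have at: "?F j = 0"
      using 3 by (auto simp: thr_adj_def)
    show ?thesis
      unfolding split below above at count_after_sum using 3 False
      by (simp add: thr_eigvec_def thr_eig_def algebra_simps)
  qed
qed

lemma sum_thr_eigvec:
  assumes "0 < j" "j < n"
  shows "(\<Sum>q = 0..<n. thr_eigvec j q) = 0"
proof -
  have "(\<Sum>q = 0..<n. thr_eigvec j q)
      = (\<Sum>q = 0..<j. thr_eigvec j q) + thr_eigvec j j + (\<Sum>q = Suc j..<n. thr_eigvec j q)"
    by (rule sum_split_at[OF assms(2)])
  also have "(\<Sum>q = 0..<j. thr_eigvec j q) = real j"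
    using assms by (simp add: thr_eigvec_def)
  also have "(\<Sum>q = Suc j..<n. thr_eigvec j q) = 0"
    using assms by (intro sum.neutral) (auto simp: thr_eigvec_def)
  finally show ?thesis
    using assms by (simp add: thr_eigvec_def)
qed

lemma thr_eigvec_orthogonal:
  assumes "j < n" "k < n" "j \<noteq> k"
  shows "(\<Sum>q = 0..<n. thr_eigvec j q * thr_eigvec k q) = 0"
proof -
  have ortho: "(\<Sum>q = 0..<n. thr_eigvec i q * thr_eigvec l q) = 0" if "i < l" "l < n" for i l
  proof (cases "i = 0")
    case True
    then show ?thesis
      using sum_thr_eigvec[of l n] that by (simp add: thr_eigvec_def)
  next
    case False
    have "(\<Sum>q = 0..<n. thr_eigvec i q * thr_eigvec l q) = (\<Sum>q = 0..<n. thr_eigvec i q)"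
      using that False by (intro sum.cong) (auto simp: thr_eigvec_def)
    then show ?thesis
      using sum_thr_eigvec[of i n] that False by simp
  qed
  then show ?thesis
    using assms ortho[of j k] ortho[of k j] by (cases "j < k") (simp_all add: mult.commute)
qed

lemma thr_eigvec_norm_nonzero:
  assumes "j < n"
  shows "(\<Sum>q = 0..<n. thr_eigvec j q * thr_eigvec j q) \<noteq> 0"
proof -
  have "0 < thr_eigvec j j * thr_eigvec j j"
    by (simp add: thr_eigvec_def)
  also have "\<dots> \<le> (\<Sum>q = 0..<n. thr_eigvec j q * thr_eigvec j q)"
    using assms by (intro member_le_sum) auto
  finally show ?thesis
    by simp
qed

lemma char_poly_threshold:
  assumes "bij_betw \<sigma> {0..<n} {0..<n}"
    and "\<And>i j. i < n \<Longrightarrow> j < n \<Longrightarrow> T (\<sigma> i) (\<sigma> j) \<longleftrightarrow> thr_adj b i j"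
  shows "char_poly (laplacian n T) = (\<Prod>j\<leftarrow>[0..<n]. [:- real (thr_eig b n j), 1:])"
  using assms thr_eigvec_eigen thr_eigvec_orthogonal thr_eigvec_norm_nonzero
  by (intro char_poly_laplacian_relabelled_eigenbasis[OF assms(1)]) (simp_all cong: if_cong)

definition dominating :: "(nat \<Rightarrow> bool) \<Rightarrow> nat \<Rightarrow> nat set" where
  "dominating b n = {u \<in> {1..<n}. b u}"

lemma count_after_Suc: "j < n \<Longrightarrow> count_after b (Suc n) j = count_after b n j + (if b n then 1 else 0)"
proof -
  assume j: "j < n"
  have "{u \<in> {Suc j..<Suc n}. b u} = {u \<in> {Suc j..<n}. b u} \<union> (if b n then {n} else {})"
    using j by (auto simp: less_Suc_eq)
  then show ?thesis unfolding count_after_def by (simp add: card_insert_if)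
qed

lemma count_after_eq_0: "n \<le> Suc j \<Longrightarrow> count_after b n j = 0"
  unfolding count_after_def by simp

lemma thr_eig_Suc: "j < n \<Longrightarrow> thr_eig b (Suc n) j = thr_eig b n j + (if b n \<and> j \<noteq> 0 then 1 else 0)"
  unfolding thr_eig_def by (simp add: count_after_Suc)

lemma thr_eig_last: "thr_eig b (Suc n) n = (if n = 0 then 0 else if b n then n + 1 else 0)"
  unfolding thr_eig_def by (simp add: count_after_eq_0)

lemma dominating_Suc: "dominating b (Suc n) = (if b n \<and> n \<noteq> 0 then insert n (dominating b n) else dominating b n)"
  unfolding dominating_def by (auto simp: less_Suc_eq)

lemma finite_dominating: "finite (dominating b n)"
  unfolding dominating_def by simp

lemma sum_dominating_Suc: "\<Sum>(dominating b (Suc n)) = \<Sum>(dominating b n) + (if b n \<and> n \<noteq> 0 then n else 0)"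
  unfolding dominating_Suc by (simp add: finite_dominating dominating_def)

lemma sum_thr_eig_Suc_le:
  assumes "S \<subseteq> {0..<n}"
  shows "(\<Sum>j\<in>S. thr_eig b (Suc n) j) \<le> (\<Sum>j\<in>S. thr_eig b n j) + (if b n then card S else 0)"
proof -
  have "(\<Sum>j\<in>S. thr_eig b (Suc n) j) \<le> (\<Sum>j\<in>S. thr_eig b n j + (if b n then 1 else 0))"
    using assms by (intro sum_mono) (auto simp: thr_eig_Suc)
  also have "\<dots> = (\<Sum>j\<in>S. thr_eig b n j) + (if b n then card S else 0)"
    by (simp add: sum.distrib)
  finally show ?thesis .
qed

lemma sum_thr_eig_le:
  "S \<subseteq> {0..<n} \<Longrightarrow> (\<Sum>j\<in>S. thr_eig b n j) \<le> \<Sum>(dominating b n) + \<Sum>{1..card S}"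
proof (induction n arbitrary: S)
  case (Suc n)
  define S' where "S' = S - {n}"
  have "S' \<subseteq> {0..<n}"
    using Suc.prems unfolding S'_def by auto
  then have S': "S' \<subseteq> {0..<n}" "finite S'" "card S' \<le> n"
    using card_mono[of "{0..<n}" S'] finite_subset[of S' "{0..<n}"] by auto
  have IH: "(\<Sum>j\<in>S'. thr_eig b (Suc n) j) \<le> \<Sum>(dominating b n) + \<Sum>{1..card S'} + (if b n then card S' else 0)"
    using Suc.IH[OF S'(1)] sum_thr_eig_Suc_le[OF S'(1), of b] by simp
  show ?case
  proof (cases "n \<in> S")
    case False
    then have "S = S'"
      unfolding S'_def by auto
    then show ?thesis
      using IH S'(2,3) by (cases "n = 0") (auto simp: sum_dominating_Suc)
  next
    case True
    then have "S = insert n S'" "n \<notin> S'"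
      unfolding S'_def by auto
    then have "(\<Sum>j\<in>S. thr_eig b (Suc n) j) = thr_eig b (Suc n) n + (\<Sum>j\<in>S'. thr_eig b (Suc n) j)"
      "card S = Suc (card S')"
      using S'(2) by simp_all
    then show ?thesis
      using IH S'(2,3) by (cases "n = 0") (auto simp: sum_dominating_Suc thr_eig_last)
  qed
qed simp

lemma sum_thr_eig: "(\<Sum>j = 0..<n. thr_eig b n j) = 2 * \<Sum>(dominating b n)"
proof (induction n)
  case 0
  then show ?case by (simp add: dominating_def)
next
  case (Suc n)
  have "(\<Sum>j = 0..<Suc n. thr_eig b (Suc n) j) = (\<Sum>j = 0..<n. thr_eig b (Suc n) j) + thr_eig b (Suc n) n" by simp
  also have "(\<Sum>j = 0..<n. thr_eig b (Suc n) j) = (\<Sum>j = 0..<n. thr_eig b n j + (if b n \<and> j \<noteq> 0 then 1 else 0))"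
    by (rule sum.cong) (auto simp: thr_eig_Suc)
  also have "\<dots> = (\<Sum>j = 0..<n. thr_eig b n j) + (\<Sum>j = 0..<n. (if b n \<and> j \<noteq> 0 then 1 else 0))"
    by (rule sum.distrib)
  also have "(\<Sum>j = 0..<n. (if b n \<and> j \<noteq> 0 then 1 else 0)) = (if b n then n - 1 else (0::nat))"
  proof (cases "b n")
    case True
    have "(\<Sum>j = 0..<n. (if b n \<and> j \<noteq> 0 then 1 else 0)) = card {j \<in> {0..<n}. j \<noteq> 0}"
      using True by (simp add: sum.If_cases Int_def)
    also have "{j \<in> {0..<n}. j \<noteq> 0} = {1..<n}" by auto
    finally show ?thesis using True by simp
  qed simp
  finally show ?case using Suc.IH by (cases "n = 0") (auto simp: sum_dominating_Suc thr_eig_last)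
qed

lemma sum_thr_eig_dominating: "(\<Sum>j\<in>dominating b n. thr_eig b n j) = \<Sum>(dominating b n) + \<Sum>{1..card (dominating b n)}"
proof (induction n)
  case 0
  then show ?case by (simp add: dominating_def)
next
  case (Suc n)
  have sub: "dominating b n \<subseteq> {0..<n}" unfolding dominating_def by auto
  have pos: "j \<noteq> 0" if "j \<in> dominating b n" for j using that unfolding dominating_def by auto
  have eq: "(\<Sum>j\<in>dominating b n. thr_eig b (Suc n) j) = (\<Sum>j\<in>dominating b n. thr_eig b n j) + (if b n then card (dominating b n) else 0)"
  proof -
    have "(\<Sum>j\<in>dominating b n. thr_eig b (Suc n) j) = (\<Sum>j\<in>dominating b n. thr_eig b n j + (if b n then 1 else 0))"
      by (rule sum.cong) (use sub pos in \<open>auto simp: thr_eig_Suc\<close>)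
    then show ?thesis by (simp add: sum.distrib)
  qed
  show ?case
  proof (cases "b n \<and> n \<noteq> 0")
    case True
    have nQ: "n \<notin> dominating b n" unfolding dominating_def by auto
    have "(\<Sum>j\<in>dominating b (Suc n). thr_eig b (Suc n) j) = thr_eig b (Suc n) n + (\<Sum>j\<in>dominating b n. thr_eig b (Suc n) j)"
      unfolding dominating_Suc using True nQ finite_dominating by simp
    also have "\<dots> = \<Sum>(dominating b (Suc n)) + \<Sum>{1..card (dominating b (Suc n))}"
      unfolding eq Suc.IH using True nQ finite_dominating by (simp add: dominating_Suc sum_dominating_Suc thr_eig_last)
    finally show ?thesis .
  next
    case False
    then have "dominating b n = {} \<or> \<not> b n"
      unfolding dominating_def by auto
    then show ?thesis using eq Suc.IH False by (auto simp: dominating_Suc sum_dominating_Suc)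
  qed
qed

lemma thr_eig_eq_0_above:
  assumes "\<And>u. N < u \<Longrightarrow> u < n \<Longrightarrow> \<not> b u" "N < j" "j < n"
  shows "thr_eig b n j = 0"
proof -
  have "{u \<in> {Suc j..<n}. b u} = {}" using assms by auto
  then show ?thesis using assms unfolding thr_eig_def count_after_def by auto
qed

lemma thr_eig_top_block:
  assumes "\<And>u. n - k \<le> u \<Longrightarrow> u < n \<Longrightarrow> b u" "k < n" "n - k \<le> j" "j < n"
  shows "thr_eig b n j = n"
proof -
  have "{u \<in> {Suc j..<n}. b u} = {Suc j..<n}" using assms by auto
  then have "count_after b n j = n - Suc j" unfolding count_after_def by simp
  moreover have "b j" "j \<noteq> 0" using assms by auto
  ultimately show ?thesis unfolding thr_eig_def using assms by simp
qed

lemma lap_eigs_threshold: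
  assumes \<sigma>: "bij_betw \<sigma> {0..<n} {0..<n}"
    and T: "\<And>i j. i < n \<Longrightarrow> j < n \<Longrightarrow> T (\<sigma> i) (\<sigma> j) \<longleftrightarrow> thr_adj b i j"
    and g: "is_graph n T"
  shows "lap_eigs n T = rev (sort (map (\<lambda>j. real (thr_eig b n j)) [0..<n]))"
    and "num_edges n T = \<Sum>(dominating b n)"
proof -
  have cp: "char_poly (laplacian n T) = (\<Prod>x\<leftarrow>map (\<lambda>j. real (thr_eig b n j)) [0..<n]. [:- x, 1:])"
    using char_poly_threshold[OF \<sigma> T] by (simp add: o_def)
  show "lap_eigs n T = rev (sort (map (\<lambda>j. real (thr_eig b n j)) [0..<n]))"
    by (rule lap_eigs_eq_rev_sort[OF _ cp]) simp
  have "real (\<Sum>j = 0..<n. thr_eig b n j) = 2 * real (num_edges n T)"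
    using sum_roots_laplacian[OF g cp] by (simp add: sum_list_distinct_conv_sum_set)
  then show "num_edges n T = \<Sum>(dominating b n)"
    unfolding sum_thr_eig by linarith
qed

lemma lap_sum_threshold_le:
  assumes "is_threshold n T" "k \<le> n"
  shows "lap_sum n T k \<le> real (num_edges n T) + real (\<Sum>{1..k})"
proof -
  obtain vs bs where g: "is_graph n T" and vs: "distinct vs" "set vs = {0..<n}"
      "\<forall>i<n. \<forall>j<n. T (vs ! i) (vs ! j) \<longleftrightarrow> thr_adj (\<lambda>j. bs ! j) i j"
    using assms(1) unfolding is_threshold_def thr_adj_def by blast
  define f where "f j = thr_eig (\<lambda>j. bs ! j) n j" for j
  have "length vs = n"
    using vs(1,2) by (metis distinct_card card_atLeastLessThan diff_zero)
  then have \<sigma>: "bij_betw ((!) vs) {0..<n} {0..<n}"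
    using bij_betw_nth[OF vs(1)] vs(2) by (simp add: atLeast0LessThan)
  have T: "T (vs ! i) (vs ! j) \<longleftrightarrow> thr_adj (\<lambda>j. bs ! j) i j" if "i < n" "j < n" for i j
    using vs(3) that by blast
  note eigs = lap_eigs_threshold[OF \<sigma> T g, folded f_def]
  have "mset (lap_eigs n T) = mset (map (\<lambda>j. real (f j)) [0..<n])"
    using eigs(1) by simp
  then obtain S where S: "S \<subseteq> {..<n}" "card S = k" "lap_sum n T k = (\<Sum>j\<in>S. real (f j))"
    unfolding lap_sum_def using sum_take_eq_sum_subset[OF _ assms(2)] by blast
  have "(\<Sum>j\<in>S. f j) \<le> \<Sum>(dominating (\<lambda>j. bs ! j) n) + \<Sum>{1..k}"
    using sum_thr_eig_le[of S n] S(1,2) unfolding f_def by (simp add: atLeast0LessThan)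
  then have "(\<Sum>j\<in>S. f j) \<le> num_edges n T + \<Sum>{1..k}"
    using eigs(2) by simp
  then have "(\<Sum>j\<in>S. real (f j)) \<le> real (num_edges n T) + real (\<Sum>{1..k})"
    unfolding of_nat_sum[symmetric] of_nat_add[symmetric] of_nat_le_iff .
  then show ?thesis
    using S(3) by simp
qed

section \<open>Subset sums\<close>

lemma sum_initial_eq_choose: "\<Sum>{1..k} = Suc k choose 2"
  by (induction k) (simp_all add: numeral_2_eq_2)

lemma sum_initial_split:
  "k \<le> (N :: nat) \<Longrightarrow> \<Sum>{1..N} = \<Sum>{1..N - k} + \<Sum>{Suc N - k..N}"
  using sum.ub_add_nat[of 1 "N - k" id k] by (cases "k = N") (simp_all add: Suc_diff_le)

lemma sum_initial_le_sum_top: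
  "k \<le> (N :: nat) \<Longrightarrow> \<Sum>{1..k} \<le> \<Sum>{Suc N - k..N}"
proof (induction k arbitrary: N)
  case (Suc k)
  then obtain N' where "N = Suc N'" "k \<le> N'"
    by (cases N) auto
  then show ?case
    using Suc.IH[of N'] by (simp add: Suc_diff_le)
qed simp

lemma sum_top_ge:
  assumes "k < (N :: nat)"
  shows "N + \<Sum>{1..k} \<le> \<Sum>{N - k..N}"
proof -
  obtain N' where N': "N = Suc N'" "k \<le> N'"
    using assms by (cases N) auto
  then have "\<Sum>{N - k..N} = N + \<Sum>{Suc N' - k..N'}"
    by (simp add: Suc_diff_le)
  then show ?thesis
    using sum_initial_le_sum_top[OF N'(2)] by simp
qed

lemma exists_subset_sum:
  "m \<le> \<Sum>{1..N :: nat} \<Longrightarrow> \<exists>Q \<subseteq> {1..N}. \<Sum>Q = m"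
proof (induction N arbitrary: m)
  case 0
  then show ?case by auto
next
  case (Suc N)
  show ?case
  proof (cases "m \<le> \<Sum>{1..N}")
    case True
    then show ?thesis
      using Suc.IH by (meson atLeastAtMost_iff le_SucI subset_iff)
  next
    case False
    have "m - Suc N \<le> \<Sum>{1..N}"
      using Suc.prems by simp
    then obtain Q where Q: "Q \<subseteq> {1..N}" "\<Sum>Q = m - Suc N"
      using Suc.IH by blast
    have "finite Q" "Suc N \<notin> Q"
      using Q(1) finite_subset by auto
    moreover have "N \<le> \<Sum>{1..N}"
      by (cases N) auto
    ultimately have "\<Sum>(insert (Suc N) Q) = m"
      using Q(2) False by simp
    then show ?thesis
      using Q(1) by (intro exI[of _ "insert (Suc N) Q"]) auto
  qed
qed

lemma exists_subset_card_sum: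
  "k \<le> (N :: nat) \<Longrightarrow> \<Sum>{1..k} \<le> m \<Longrightarrow> m \<le> \<Sum>{Suc N - k..N} \<Longrightarrow>
    \<exists>Q \<subseteq> {1..N}. card Q = k \<and> \<Sum>Q = m"
proof (induction N arbitrary: k m)
  case (Suc N)
  show ?case
  proof (cases "k \<le> N \<and> m \<le> \<Sum>{Suc N - k..N}")
    case True
    then show ?thesis
      using Suc.IH[of k m] Suc.prems(2) by (meson atLeastAtMost_iff le_SucI subset_iff)
  next
    case False
    then obtain k' where k': "k = Suc k'" "k' \<le> N"
      using Suc.prems(1,3) by (cases k) auto
    have lower: "Suc N + \<Sum>{1..k'} \<le> m"
    proof (cases "k = Suc N")
      case True
      then show ?thesis
        using Suc.prems(2) k'(1) by simp
    next
      case False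
      then show ?thesis
        using \<open>\<not> (k \<le> N \<and> m \<le> \<Sum>{Suc N - k..N})\<close> Suc.prems(1) sum_top_ge[of k' N] k' by simp
    qed
    have "\<Sum>{1..k'} \<le> m - Suc N" "m - Suc N \<le> \<Sum>{Suc N - k'..N}"
      using lower Suc.prems(3) k' by (auto simp: Suc_diff_le split: if_split_asm)
    then obtain Q where Q: "Q \<subseteq> {1..N}" "card Q = k'" "\<Sum>Q = m - Suc N"
      using Suc.IH[OF k'(2)] by blast
    have "finite Q" "Suc N \<notin> Q"
      using Q(1) finite_subset by auto
    then show ?thesis
      using Q lower k'(1)
      by (intro exI[of _ "insert (Suc N) Q"]) auto
  qed
qed auto

section \<open>Threshold graphs attaining the bound\<close>

lemma num_edges_le:
  assumes "is_graph n A"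
  shows "num_edges n A \<le> \<Sum>{1..n - 1}"
proof -
  have "degree n A i \<le> n - 1" if "i < n" for i
  proof -
    have "{j. j < n \<and> A i j} \<subseteq> {0..<n} - {i}"
      using assms unfolding is_graph_def by auto
    then show ?thesis
      unfolding degree_def using that card_mono[of "{0..<n} - {i}"] by fastforce
  qed
  then have "2 * num_edges n A \<le> n * (n - 1)"
    unfolding sum_degree_eq_twice_num_edges[OF assms, symmetric]
    using sum_mono[of "{0..<n}" "degree n A" "\<lambda>_. n - 1"] by simp
  also have "\<dots> = 2 * \<Sum>{1..n - 1}"
    using double_gauss_sum_from_Suc_0[of "n - 1", where 'a = nat] by (cases n) simp_all
  finally show ?thesis
    by simp
qed

definition thr_graph :: "nat \<Rightarrow> nat set \<Rightarrow> nat \<Rightarrow> nat \<Rightarrow> bool" where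
  "thr_graph n Q i j \<longleftrightarrow> i < n \<and> j < n \<and> thr_adj (\<lambda>u. u \<in> Q) i j"

lemma is_threshold_thr_graph: "is_threshold n (thr_graph n Q)"
  unfolding is_threshold_def
proof (intro conjI exI)
  show "is_graph n (thr_graph n Q)"
    unfolding is_graph_def thr_graph_def thr_adj_def by auto
  show "\<forall>i<n. \<forall>j<n. thr_graph n Q ([0..<n] ! i) ([0..<n] ! j) \<longleftrightarrow>
      (i < j \<and> map (\<lambda>u. u \<in> Q) [0..<n] ! j \<or> j < i \<and> map (\<lambda>u. u \<in> Q) [0..<n] ! i)"
    unfolding thr_graph_def thr_adj_def by auto
qed auto

lemma dominating_mem: "Q \<subseteq> {1..<n} \<Longrightarrow> dominating (\<lambda>u. u \<in> Q) n = Q"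
  unfolding dominating_def by auto

lemma thr_graph_spectrum:
  assumes "Q \<subseteq> {1..<n}"
  shows "lap_eigs n (thr_graph n Q) = rev (sort (map (\<lambda>j. real (thr_eig (\<lambda>u. u \<in> Q) n j)) [0..<n]))"
    and "num_edges n (thr_graph n Q) = \<Sum>Q"
proof -
  have g: "is_graph n (thr_graph n Q)"
    using is_threshold_thr_graph unfolding is_threshold_def by blast
  have T: "thr_graph n Q (id i) (id j) \<longleftrightarrow> thr_adj (\<lambda>u. u \<in> Q) i j" if "i < n" "j < n" for i j
    using that unfolding thr_graph_def by simp
  note eigs = lap_eigs_threshold[OF bij_betw_id T g]
  show "lap_eigs n (thr_graph n Q) = rev (sort (map (\<lambda>j. real (thr_eig (\<lambda>u. u \<in> Q) n j)) [0..<n]))"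
    by (rule eigs(1))
  show "num_edges n (thr_graph n Q) = \<Sum>Q"
    using eigs(2) dominating_mem[OF assms] by simp
qed

lemma sum_thr_eig_le_lap_sum:
  assumes "Q \<subseteq> {1..<n}" "S \<subseteq> {0..<n}" "card S \<le> k" "k \<le> n"
  shows "real (\<Sum>j\<in>S. thr_eig (\<lambda>u. u \<in> Q) n j) \<le> lap_sum n (thr_graph n Q) k"
proof -
  let ?xs = "map (\<lambda>j. real (thr_eig (\<lambda>u. u \<in> Q) n j)) [0..<n]"
  have "(\<Sum>j\<in>S. real (thr_eig (\<lambda>u. u \<in> Q) n j)) \<le> (\<Sum>i<k. rev (sort ?xs) ! i)"
    using assms(2-4)
    by (intro sum_subset_le_sum_take_mset[of _ "\<lambda>j. real (thr_eig (\<lambda>u. u \<in> Q) n j)"])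
       (auto simp: sorted_wrt_rev)
  then show ?thesis
    unfolding lap_sum_def thr_graph_spectrum(1)[OF assms(1)] by simp
qed

lemma lap_sum_thr_graph_ge_twice:
  assumes Q: "Q \<subseteq> {1..<n}" "Q \<subseteq> {1..k}" and k: "k \<le> n"
  shows "2 * real (\<Sum>Q) \<le> lap_sum n (thr_graph n Q) k"
proof -
  let ?S = "{j \<in> {1..k}. j < n}"
  have "(\<Sum>j\<in>?S. thr_eig (\<lambda>u. u \<in> Q) n j) = (\<Sum>j = 0..<n. thr_eig (\<lambda>u. u \<in> Q) n j)"
  proof (rule sum.mono_neutral_left)
    show "\<forall>j\<in>{0..<n} - ?S. thr_eig (\<lambda>u. u \<in> Q) n j = 0"
    proof
      fix j assume "j \<in> {0..<n} - ?S"
      then consider "j = 0" | "k < j" "j < n"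
        by fastforce
      then show "thr_eig (\<lambda>u. u \<in> Q) n j = 0"
      proof cases
        case 2
        then show ?thesis
          using Q(2) by (intro thr_eig_eq_0_above[of k]) auto
      qed (simp add: thr_eig_def)
    qed
  qed auto
  also have "\<dots> = 2 * \<Sum>Q"
    using sum_thr_eig[of "\<lambda>u. u \<in> Q" n] dominating_mem[OF Q(1)] by simp
  moreover have "card ?S \<le> card {1..k}"
    by (rule card_mono) auto
  then have "real (\<Sum>j\<in>?S. thr_eig (\<lambda>u. u \<in> Q) n j) \<le> lap_sum n (thr_graph n Q) k"
    by (intro sum_thr_eig_le_lap_sum[OF Q(1) _ _ k]) auto
  ultimately show ?thesis
    by simp
qed

lemma lap_sum_thr_graph_ge_card:
  assumes Q: "Q \<subseteq> {1..<n}" "card Q \<le> k" and k: "k \<le> n"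
  shows "real (\<Sum>Q + \<Sum>{1..card Q}) \<le> lap_sum n (thr_graph n Q) k"
  using sum_thr_eig_le_lap_sum[OF Q(1) _ Q(2) k] Q(1) sum_thr_eig_dominating[of "\<lambda>u. u \<in> Q" n]
  unfolding dominating_mem[OF Q(1)] by (auto simp: subset_iff)

lemma lap_sum_thr_graph_ge_top:
  assumes Q: "Q \<subseteq> {1..<n}" "{n - k..<n} \<subseteq> Q" and k: "k < n"
  shows "real k * real n \<le> lap_sum n (thr_graph n Q) k"
proof -
  have "thr_eig (\<lambda>u. u \<in> Q) n j = n" if "j \<in> {n - k..<n}" for j
    using that Q(2) k by (intro thr_eig_top_block) auto
  then have "(\<Sum>j\<in>{n - k..<n}. thr_eig (\<lambda>u. u \<in> Q) n j) = k * n"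
    using k by simp
  then show ?thesis
    using sum_thr_eig_le_lap_sum[OF Q(1), of "{n - k..<n}" k] k by simp
qed

lemma exists_thr_graph_ge_twice:
  assumes "m \<le> \<Sum>{1..k}" "m \<le> \<Sum>{1..n - 1}" "k \<le> n"
  shows "\<exists>Q \<subseteq> {1..<n}. \<Sum>Q = m \<and> 2 * real m \<le> lap_sum n (thr_graph n Q) k"
proof -
  have "m \<le> \<Sum>{1..min k (n - 1)}"
    using assms by (cases "k \<le> n - 1") (simp_all add: min_def)
  then obtain Q where Q: "Q \<subseteq> {1..min k (n - 1)}" "\<Sum>Q = m"
    using exists_subset_sum by blast
  then have "Q \<subseteq> {1..<n}" "Q \<subseteq> {1..k}"
    by (auto simp: subset_iff)
  then show ?thesis
    using lap_sum_thr_graph_ge_twice[OF _ _ assms(3)] Q(2) by blast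
qed

lemma exists_thr_graph_ge_card:
  assumes "k < n" "\<Sum>{1..k} \<le> m" "m \<le> \<Sum>{n - k..n - 1}"
  shows "\<exists>Q \<subseteq> {1..<n}. \<Sum>Q = m \<and> real m + real (\<Sum>{1..k}) \<le> lap_sum n (thr_graph n Q) k"
proof -
  have "k \<le> n - 1" "m \<le> \<Sum>{Suc (n - 1) - k..n - 1}"
    using assms by simp_all
  then obtain Q where Q: "Q \<subseteq> {1..n - 1}" "card Q = k" "\<Sum>Q = m"
    using exists_subset_card_sum assms(2) by blast
  then have "Q \<subseteq> {1..<n}"
    by (auto simp: subset_iff)
  then show ?thesis
    using lap_sum_thr_graph_ge_card[of Q n k] Q assms(1) by auto
qed

lemma exists_thr_graph_ge_top:
  assumes "k < n" "\<Sum>{n - k..n - 1} \<le> m" "m \<le> \<Sum>{1..n - 1}"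
  shows "\<exists>Q \<subseteq> {1..<n}. \<Sum>Q = m \<and> real k * real n \<le> lap_sum n (thr_graph n Q) k"
proof -
  have top: "{n - k..<n} = {n - k..n - 1}"
    using assms(1) by auto
  have "m - \<Sum>{n - k..n - 1} \<le> \<Sum>{1..n - 1 - k}"
    using sum_initial_split[of k "n - 1"] assms by (simp add: Suc_diff_Suc)
  then obtain Q' where Q': "Q' \<subseteq> {1..n - 1 - k}" "\<Sum>Q' = m - \<Sum>{n - k..n - 1}"
    using exists_subset_sum by blast
  have "{n - k..<n} \<inter> Q' = {}"
    using Q'(1) assms(1) by fastforce
  moreover have "finite Q'"
    using Q'(1) by (rule finite_subset) simp
  ultimately have "\<Sum>({n - k..<n} \<union> Q') = m"
    using Q'(2) assms(2) by (simp add: sum.union_disjoint top)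
  moreover have "{n - k..<n} \<union> Q' \<subseteq> {1..<n}"
    using Q'(1) assms(1) by (auto simp: subset_iff)
  ultimately show ?thesis
    using lap_sum_thr_graph_ge_top[OF _ _ assms(1)] by blast
qed

lemma exists_threshold_lap_sum_ge:
  assumes k: "k \<le> n" and m: "m \<le> \<Sum>{1..n - 1}"
  shows "\<exists>T. is_threshold n T \<and> num_edges n T = m \<and>
    min (2 * real m) (min (real m + real (\<Sum>{1..k})) (real k * real n)) \<le> lap_sum n T k"
proof -
  have "\<exists>Q \<subseteq> {1..<n}. \<Sum>Q = m \<and>
      min (2 * real m) (min (real m + real (\<Sum>{1..k})) (real k * real n)) \<le> lap_sum n (thr_graph n Q) k"
  proof (cases "m \<le> \<Sum>{1..k}")
    case True
    then show ?thesis
      using exists_thr_graph_ge_twice[OF True m k] by (auto simp: min_le_iff_disj)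
  next
    case False
    have "k < n"
      using False m k sum_mono2[of "{1..k}" "{1..n - 1}" id] by (cases "k < n") auto
    then show ?thesis
      using False exists_thr_graph_ge_card[of k n m] exists_thr_graph_ge_top[of k n m] m
      by (cases "m \<le> \<Sum>{n - k..n - 1}") (auto simp: min_le_iff_disj)
  qed
  then show ?thesis
    using is_threshold_thr_graph thr_graph_spectrum(2) by blast
qed

theorem theorem4:
  fixes n m :: nat and G :: "nat \<Rightarrow> nat \<Rightarrow> bool"
  assumes "is_graph n G" and "m = num_edges n G"
  shows "(\<forall>k \<in> {1..n}. lap_sum n G k \<le> real m + real ((k + 1) choose 2))
         \<longleftrightarrow> spectrally_threshold_dominated n G"
proof
  assume bound: "\<forall>k \<in> {1..n}. lap_sum n G k \<le> real m + real ((k + 1) choose 2)"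
  show "spectrally_threshold_dominated n G"
    unfolding spectrally_threshold_dominated_def
  proof
    fix k assume k: "k \<in> {1..n}"
    have "lap_sum n G k \<le> real m + real (\<Sum>{1..k})"
      unfolding sum_initial_eq_choose using bound k by simp
    then have "lap_sum n G k \<le> min (2 * real m) (min (real m + real (\<Sum>{1..k})) (real k * real n))"
      using k lap_sum_le_twice_num_edges[OF assms(1)] lap_sum_le_mult[OF assms(1)] assms(2) by simp
    moreover obtain T where "is_threshold n T" "num_edges n T = m"
        "min (2 * real m) (min (real m + real (\<Sum>{1..k})) (real k * real n)) \<le> lap_sum n T k"
      using exists_threshold_lap_sum_ge[of k n m] num_edges_le[OF assms(1)] assms(2) k by auto
    ultimately show "\<exists>T. is_threshold n T \<and> num_edges n T = num_edges n G \<and> lap_sum n G k \<le> lap_sum n T k"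
      using assms(2) by auto
  qed
next
  assume "spectrally_threshold_dominated n G"
  then show "\<forall>k \<in> {1..n}. lap_sum n G k \<le> real m + real ((k + 1) choose 2)"
    unfolding spectrally_threshold_dominated_def
    using lap_sum_threshold_le assms(2) sum_initial_eq_choose by fastforce
qed

end
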